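(* Let $c>0$, $n\ge 1$, and let $\mathbb{R}^n_c=\{\mathbf{v}\in\mathbb{R}^n:\|\mathbf{v}\|<c\}$ be equipped with Möbius addition $\oplus$, Möbius scalar multiplication $\otimes$ and Möbius coaddition $\boxplus$ (defined in the context). Let $A,B\in\mathbb{R}^n_c$ be distinct, and for $t\in\mathbb{R}$ let $$L_{AB}(t)=A\oplus\big((\ominus A\oplus B)\otimes t\big).$$ Then for all $t\in\mathbb{R}$, $$2\otimes L_{AB}(t)=A\boxplus L_{AB}(2t).$$
   Context: Möbius addition in the ball $\mathbb{R}^n_c$ is $$\mathbf{u}\oplus\mathbf{v}=\frac{\big(1+\frac{2}{c^2}\mathbf{u}\cdot\mathbf{v}+\frac{1}{c^2}\|\mathbf{v}\|^2\big)\mathbf{u}+\big(1-\frac{1}{c^2}\|\mathbf{u}\|^2\big)\mathbf{v}}{1+\frac{2}{c^2}\mathbf{u}\cdot\mathbf{v}+\frac{1}{c^4}\|\mathbf{u}\|^2\|\mathbf{v}\|^2},$$ with $\ominus\mathbf{v}=-\mathbf{v}$ and $\mathbf{u}\ominus\mathbf{v}=\mathbf{u}\oplus(-\mathbf{v})$. Scalar multiplication: for $r\in\mathbb{R}$ and $\mathbf{v}\neq\mathbf{0}$, $r\otimes\mathbf{v}=\mathbf{v}\otimes r=c\tanh\!\big(r\tanh^{-1}(\|\mathbf{v}\|/c)\big)\frac{\mathbf{v}}{\|\mathbf{v}\|}$, and $r\otimes\mathbf{0}=\mathbf{0}$. The gyration generated by $\mathbf{u},\mathbf{v}$ is the map $\mathrm{gyr}[\mathbf{u},\mathbf{v}]\mathbf{w}=\ominus(\mathbf{u}\oplus\mathbf{v})\oplus\big(\mathbf{u}\oplus(\mathbf{v}\oplus\mathbf{w})\big)$.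 Möbius coaddition is $\mathbf{a}\boxplus\mathbf{b}=\mathbf{a}\oplus\mathrm{gyr}[\mathbf{a},\ominus\mathbf{b}]\mathbf{b}$ for $\mathbf{a},\mathbf{b}\in\mathbb{R}^n_c$. *)

theory Defs
  imports "HOL-Analysis.Analysis"
begin

text \<open>Moebius gyrovector space structure on the ball of radius c in R^n,
  realised on vectors of type real ^ 'n (n = CARD('n)).\<close>

definition mob_add :: "real \<Rightarrow> real ^ 'n \<Rightarrow> real ^ 'n \<Rightarrow> real ^ 'n" where
  "mob_add c u v =
     inverse (1 + (2 / c^2) * (u \<bullet> v) + (1 / c^4) * (norm u)^2 * (norm v)^2) *\<^sub>R
     ((1 + (2 / c^2) * (u \<bullet> v) + (1 / c^2) * (norm v)^2) *\<^sub>R u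
      + (1 - (1 / c^2) * (norm u)^2) *\<^sub>R v)"

definition mob_neg :: "real ^ 'n \<Rightarrow> real ^ 'n" where
  "mob_neg v = - v"

definition mob_sub :: "real \<Rightarrow> real ^ 'n \<Rightarrow> real ^ 'n \<Rightarrow> real ^ 'n" where
  "mob_sub c u v = mob_add c u (mob_neg v)"

definition mob_smult :: "real \<Rightarrow> real \<Rightarrow> real ^ 'n \<Rightarrow> real ^ 'n" where
  "mob_smult c r v =
     (if v = 0 then 0
      else (c * tanh (r * artanh (norm v / c))) *\<^sub>R (inverse (norm v) *\<^sub>R v))"

definition mob_gyr :: "real \<Rightarrow> real ^ 'n \<Rightarrow> real ^ 'n \<Rightarrow> real ^ 'n \<Rightarrow> real ^ 'n" where
  "mob_gyr c u v w = mob_add c (mob_neg (mob_add c u v)) (mob_add c u (mob_add c v w))"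

definition mob_coadd :: "real \<Rightarrow> real ^ 'n \<Rightarrow> real ^ 'n \<Rightarrow> real ^ 'n" where
  "mob_coadd c a b = mob_add c a (mob_gyr c a (mob_neg b) b)"

definition mob_line :: "real \<Rightarrow> real ^ 'n \<Rightarrow> real ^ 'n \<Rightarrow> real \<Rightarrow> real ^ 'n" where
  "mob_line c A B t = mob_add c A (mob_smult c t (mob_add c (mob_neg A) B))"

end

theory Submission
  imports Defs
begin

text \<open>Put \<open>w = t \<otimes> (\<ominus>A \<oplus> B)\<close>. Scalar multiplication is associative, so
  \<open>L(2t) = A \<oplus> (2 \<otimes> w)\<close>, and the claim becomes \<open>2 \<otimes> (A \<oplus> w) = A \<boxplus> (A \<oplus> (2 \<otimes> w))\<close>
  for arbitrary \<open>A, w\<close> in the ball.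
  With \<open>k = 1/c\<^sup>2\<close>, doubling is \<open>2 \<otimes> x = 2x / (1 + k\<parallel>x\<parallel>\<^sup>2)\<close>, and coaddition has the
  closed form \<open>a \<boxplus> b = ((1 - k\<parallel>b\<parallel>\<^sup>2) a + (1 - k\<parallel>a\<parallel>\<^sup>2) b) / (1 - k\<^sup>2\<parallel>a\<parallel>\<^sup>2\<parallel>b\<parallel>\<^sup>2)\<close>,
  because \<open>gyr[a,\<ominus>b]b = \<ominus>(a \<ominus> b) \<oplus> a\<close> is an explicit vector of \<open>span {a, b}\<close> with the
  norm of \<open>b\<close>. Hence both sides are combinations of \<open>A\<close> and \<open>w\<close> whose coefficients are
  rational functions of \<open>k\<close>, \<open>\<parallel>A\<parallel>\<^sup>2\<close>, \<open>\<parallel>w\<parallel>\<^sup>2\<close> and \<open>A \<bullet> w\<close>, and these agree.\<close>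

lemma scaleR_pair_cong: "x = x' \<Longrightarrow> y = y' \<Longrightarrow> x *\<^sub>R a + y *\<^sub>R b = x' *\<^sub>R a + y' *\<^sub>R b"
  by simp

lemma scaleR_collect:
  fixes a b :: "'a::real_vector"
  shows "t *\<^sub>R (\<alpha> *\<^sub>R a + \<beta> *\<^sub>R (x *\<^sub>R a + y *\<^sub>R b)) = (t*(\<alpha> + \<beta>*x)) *\<^sub>R a + (t*\<beta>*y) *\<^sub>R b"
  by (simp add: algebra_simps)

lemma tanh_artanh_real:
  fixes z :: real
  assumes "\<bar>z\<bar> < 1"
  shows "tanh (artanh z) = z"
proof -
  have "exp (- 2 * artanh z) = inverse ((1 + z)/(1 - z))"
    using assms by (simp add: artanh_def exp_minus exp_ln)
  then have E: "exp (- 2 * artanh z) = (1 - z)/(1 + z)"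
    by simp
  show ?thesis
    unfolding tanh_real_altdef E using assms by (simp add: field_simps)
qed

lemma tanh_double_real: "tanh (2 * y) = 2 * tanh y / (1 + (tanh y)^2)" for y :: real
  using tanh_add[of y y] by (simp add: power2_eq_square)

lemma mob_add_curv:
  fixes u v :: "real ^ 'n"
  assumes "k = 1/c^2"
  shows "mob_add c u v = (1 / (1 + 2*k*(u \<bullet> v) + k^2*(u \<bullet> u)*(v \<bullet> v))) *\<^sub>R
      ((1 + 2*k*(u \<bullet> v) + k*(v \<bullet> v)) *\<^sub>R u + (1 - k*(u \<bullet> u)) *\<^sub>R v)"
proof -
  have "1/c^4 = k^2" using assms by (simp add: power_divide flip: power_mult)
  then show ?thesis using assms unfolding mob_add_def
    by (simp add: power2_norm_eq_inner[symmetric] divide_inverse mult.assoc)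
qed

lemma mob_add_left_inverse: "mob_add c (- v) v = 0"
proof -
  have "(1 + (2 / c^2) * ((-v) \<bullet> v) + (1 / c^2) * (norm v)^2) *\<^sub>R (-v)
      + (1 - (1 / c^2) * (norm (-v))^2) *\<^sub>R v = 0"
    by (simp add: power2_norm_eq_inner algebra_simps)
  then show ?thesis
    unfolding mob_add_def by simp
qed

lemma mob_add_zero_right: "mob_add c u 0 = u"
  unfolding mob_add_def by simp

lemma norm_less_iff_curv:
  fixes x :: "real ^ 'n"
  assumes "c > 0" and "k = 1/c^2"
  shows "norm x < c \<longleftrightarrow> k * (x \<bullet> x) < 1"
proof -
  have "c^2 \<le> (norm x)^2 \<longleftrightarrow> c \<le> norm x"
    using assms(1) by (intro power_mono_iff) auto
  then have "norm x < c \<longleftrightarrow> (norm x)^2 < c^2"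
    by (simp add: not_le[symmetric])
  also have "\<dots> \<longleftrightarrow> k * (x \<bullet> x) < 1"
    using assms by (simp add: power2_norm_eq_inner divide_less_eq)
  finally show ?thesis .
qed

lemma mob_add_denom_pos:
  fixes u v :: "real ^ 'n"
  assumes "c > 0" and "k = 1/c^2" and "norm u < c" and "norm v < c"
  shows "1 + 2*k*(u \<bullet> v) + k^2*(u \<bullet> u)*(v \<bullet> v) > 0"
proof -
  define m where "m = k * norm u * norm v"
  have "norm u * norm v < c * c"
    using assms by (intro mult_strict_mono') auto
  then have "m < 1"
    using assms by (simp add: m_def power2_eq_square divide_less_eq)
  have "\<bar>u \<bullet> v\<bar> \<le> norm u * norm v"
    by (rule Cauchy_Schwarz_ineq2)
  moreover have "k > 0"
    using assms by simp
  ultimately have "k * -(norm u * norm v) \<le> k*(u \<bullet> v)"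
    by (intro mult_left_mono) auto
  then have "-m \<le> k*(u \<bullet> v)"
    by (simp add: m_def mult.assoc)
  moreover have "k^2*(u \<bullet> u)*(v \<bullet> v) = m^2"
    by (simp add: m_def power2_norm_eq_inner[symmetric] power_mult_distrib)
  ultimately have "1 + 2*k*(u \<bullet> v) + k^2*(u \<bullet> u)*(v \<bullet> v) \<ge> (1 - m)^2"
    by (simp add: power2_eq_square algebra_simps)
  moreover have "(1 - m)^2 > 0"
    using \<open>m < 1\<close> by simp
  ultimately show ?thesis
    by linarith
qed

lemma mob_add_norm:
  fixes u v :: "real ^ 'n"
  assumes "c > 0" and k: "k = 1/c^2" and "norm u < c" and "norm v < c"
  shows "1 - k*(mob_add c u v \<bullet> mob_add c u v) =
    (1 - k*(u \<bullet> u))*(1 - k*(v \<bullet> v)) / (1 + 2*k*(u \<bullet> v) + k^2*(u \<bullet> u)*(v \<bullet> v))"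
proof -
  define p q r where "p = u \<bullet> u" and "q = v \<bullet> v" and "r = u \<bullet> v"
  define D where "D = 1 + 2*k*r + k^2*p*q"
  have "D > 0"
    unfolding D_def p_def q_def r_def using mob_add_denom_pos[OF assms] .
  have N: "mob_add c u v \<bullet> mob_add c u v =
      ((1 + 2*k*r + k*q)^2*p + 2*(1 + 2*k*r + k*q)*(1 - k*p)*r + (1 - k*p)^2*q) / D^2"
    unfolding mob_add_curv[OF k] p_def q_def r_def D_def
    by (simp add: inner_add_left inner_add_right inner_commute power2_eq_square algebra_simps
        add_divide_distrib)
  show ?thesis
    unfolding N p_def[symmetric] q_def[symmetric] r_def[symmetric] D_def[symmetric]
    using \<open>D > 0\<close> by (simp add: field_simps) (unfold D_def, algebra)
qed

lemma mob_add_in_ball: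
  fixes u v :: "real ^ 'n"
  assumes "c > 0" and "norm u < c" and "norm v < c"
  shows "norm (mob_add c u v) < c"
proof -
  define k :: real where "k = 1/c^2"
  note curv = assms(1) k_def assms(2,3)
  have "(1 - k*(u \<bullet> u))*(1 - k*(v \<bullet> v)) / (1 + 2*k*(u \<bullet> v) + k^2*(u \<bullet> u)*(v \<bullet> v)) > 0"
    using assms mob_add_denom_pos[OF curv] by (simp add: norm_less_iff_curv[OF assms(1) k_def])
  then show ?thesis
    using mob_add_norm[OF curv] by (simp add: norm_less_iff_curv[OF assms(1) k_def])
qed

lemma mob_gyr_neg_self:
  fixes a b :: "real ^ 'n"
  assumes c: "c > 0" and k: "k = 1/c^2" and na: "norm a < c" and nb: "norm b < c"
  defines "p \<equiv> a \<bullet> a" and "q \<equiv> b \<bullet> b" and "r \<equiv> a \<bullet> b"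
  defines "d \<equiv> 1 - 2*k*r + k^2*p*q"
  shows "mob_gyr c a (mob_neg b) b = (-2*k*q*(1 - k*r)/d) *\<^sub>R a + ((1 - k^2*p*q)/d) *\<^sub>R b"
proof -
  have "d > 0"
    using mob_add_denom_pos[OF c k na, of "-b"] nb unfolding d_def p_def q_def r_def by simp
  moreover have "k*p < 1"
    using na unfolding p_def norm_less_iff_curv[OF c k] .
  ultimately have nz: "d \<noteq> 0" "1 - k*p \<noteq> 0"
    by simp_all
  define u where "u = mob_add c a (-b)"
  define x1 y1 where "x1 = (1 - 2*k*r + k*q)/d" and "y1 = -(1 - k*p)/d"
  have u: "u = x1 *\<^sub>R a + y1 *\<^sub>R b"
    unfolding u_def mob_add_curv[OF k] x1_def y1_def d_def p_def q_def r_def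
    by (simp add: algebra_simps divide_inverse)
  have uu: "1 - k*(u \<bullet> u) = (1 - k*p)*(1 - k*q)/d"
    using mob_add_norm[OF c k na, of "-b"] nb unfolding u_def d_def p_def q_def r_def by simp
  have ua: "u \<bullet> a = x1*p + y1*r"
    unfolding u by (simp add: inner_add_left inner_add_right p_def r_def inner_commute)
  have D: "1 + 2*k*((-u) \<bullet> a) + k^2*((-u) \<bullet> (-u))*(a \<bullet> a) = (1 - k*p)^2/d"
  proof -
    have "1 + 2*k*((-u) \<bullet> a) + k^2*((-u) \<bullet> (-u))*(a \<bullet> a)
        = 1 - 2*k*(x1*p + y1*r) + (k*(u \<bullet> u))*(k*p)"
      using ua by (simp add: p_def[symmetric] power2_eq_square algebra_simps)
    also have "\<dots> = (1 - k*p)^2/d"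
      using uu nz unfolding x1_def y1_def by (simp add: field_simps) (use d_def in algebra)
    finally show ?thesis .
  qed
  have g: "mob_gyr c a (mob_neg b) b = mob_add c (-u) a"
    unfolding mob_gyr_def mob_neg_def mob_add_left_inverse mob_add_zero_right u_def ..
  define m where "m = 1 - 2*k*(x1*p + y1*r) + k*p"
  have "mob_add c (-u) a = (d/(1 - k*p)^2) *\<^sub>R (m *\<^sub>R (-u) + ((1 - k*p)*(1 - k*q)/d) *\<^sub>R a)"
    unfolding mob_add_curv[OF k] D
    unfolding inner_minus_left inner_minus_right minus_minus uu p_def[symmetric]
    by (simp add: m_def ua algebra_simps)
  also have "\<dots> = (d/(1 - k*p)^2 * ((1 - k*p)*(1 - k*q)/d - m*x1)) *\<^sub>R a
      + (- d/(1 - k*p)^2 * m*y1) *\<^sub>R b"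
    unfolding u by (simp add: algebra_simps)
  also have "\<dots> = (-2*k*q*(1 - k*r)/d) *\<^sub>R a + ((1 - k^2*p*q)/d) *\<^sub>R b"
    unfolding m_def x1_def y1_def
    using nz by (intro scaleR_pair_cong; simp add: field_simps; use d_def in algebra)
  finally show ?thesis
    unfolding g .
qed

lemma mob_coadd_eq:
  fixes a b :: "real ^ 'n"
  assumes c: "c > 0" and k: "k = 1/c^2" and na: "norm a < c" and nb: "norm b < c"
  defines "p \<equiv> a \<bullet> a" and "q \<equiv> b \<bullet> b"
  shows "mob_coadd c a b = ((1 - k*q)/(1 - k^2*p*q)) *\<^sub>R a + ((1 - k*p)/(1 - k^2*p*q)) *\<^sub>R b"
proof -
  define r where "r = a \<bullet> b"
  define d where "d = 1 - 2*k*r + k^2*p*q"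
  define x y where "x = -2*k*q*(1 - k*r)/d" and "y = (1 - k^2*p*q)/d"
  define g where "g = mob_gyr c a (mob_neg b) b"
  have g: "g = x *\<^sub>R a + y *\<^sub>R b"
    using mob_gyr_neg_self[OF c k na nb] unfolding g_def x_def y_def d_def p_def q_def r_def .
  have "k*p < 1" "k*q < 1"
    using na nb unfolding p_def q_def norm_less_iff_curv[OF c k] by simp_all
  moreover have "k*p \<ge> 0" "k*q \<ge> 0"
    using c k unfolding p_def q_def by simp_all
  ultimately have "(k*p)*(k*q) < 1*1"
    by (intro mult_strict_mono') simp_all
  moreover have "d > 0"
    using mob_add_denom_pos[OF c k na, of "-b"] nb unfolding d_def p_def q_def r_def by simp
  ultimately have nz: "d \<noteq> 0" "1 - k^2*p*q \<noteq> 0"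
    by (simp_all add: power2_eq_square algebra_simps)
  have ag: "a \<bullet> g = x*p + y*r"
    unfolding g by (simp add: inner_add_right p_def r_def)
  have gg: "k*(g \<bullet> g) = k*q"
  proof -
    have "g \<bullet> g = x*x*p + 2*x*y*r + y*y*q"
      unfolding g by (simp add: inner_add_left inner_add_right inner_commute p_def q_def r_def algebra_simps)
    then show ?thesis
      unfolding x_def y_def using nz by (simp add: field_simps) (use d_def in algebra)
  qed
  have D: "1 + 2*k*(x*p + y*r) + (k*p)*(k*q) = (1 - k^2*p*q)^2/d"
    unfolding x_def y_def using nz by (simp add: field_simps) (use d_def in algebra)
  have "mob_coadd c a b = (1/(1 + 2*k*(x*p + y*r) + (k*p)*(k*q))) *\<^sub>R
      ((1 + 2*k*(x*p + y*r) + k*q) *\<^sub>R a + (1 - k*p) *\<^sub>R (x *\<^sub>R a + y *\<^sub>R b))"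
    unfolding mob_coadd_def g_def[symmetric] mob_add_curv[OF k] ag gg[symmetric] g[symmetric] p_def[symmetric]
    by (simp add: power2_eq_square algebra_simps)
  also have "\<dots> = (d/(1 - k^2*p*q)^2 * (1 + 2*k*(x*p + y*r) + k*q + (1 - k*p)*x)) *\<^sub>R a
      + (d/(1 - k^2*p*q)^2 * (1 - k*p) * y) *\<^sub>R b"
    unfolding D scaleR_collect by simp
  also have "\<dots> = ((1 - k*q)/(1 - k^2*p*q)) *\<^sub>R a + ((1 - k*p)/(1 - k^2*p*q)) *\<^sub>R b"
  proof (rule scaleR_pair_cong)
    show "d/(1 - k^2*p*q)^2 * (1 + 2*k*(x*p + y*r) + k*q + (1 - k*p)*x) = (1 - k*q)/(1 - k^2*p*q)"
      unfolding x_def y_def using nz by (simp add: field_simps) (use d_def in algebra)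
    show "d/(1 - k^2*p*q)^2 * (1 - k*p) * y = (1 - k*p)/(1 - k^2*p*q)"
      unfolding y_def using nz by (simp add: power2_eq_square)
  qed
  finally show ?thesis .
qed

lemma mob_smult_in_ball:
  fixes v :: "real ^ 'n"
  assumes "c > 0"
  shows "norm (mob_smult c t v) < c"
proof (cases "v = 0")
  case False
  have "norm (mob_smult c t v) = c * \<bar>tanh (t * artanh (norm v / c))\<bar>"
    unfolding mob_smult_def using False assms by (simp add: abs_mult)
  also have "\<dots> < c"
    using assms tanh_real_bounds[of "t * artanh (norm v / c)"] by (simp add: abs_less_iff)
  finally show ?thesis .
qed (use assms in \<open>simp add: mob_smult_def\<close>)

lemma mob_smult_mult:
  fixes v :: "real ^ 'n"
  assumes "c > 0"
  shows "mob_smult c r (mob_smult c s v) = mob_smult c (r * s) v"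
proof (cases "v = 0 \<or> s * artanh (norm v / c) = 0")
  case True
  then show ?thesis
    by (auto simp: mob_smult_def)
next
  case False
  define x where "x = s * artanh (norm v / c)"
  have "v \<noteq> 0" "x \<noteq> 0"
    using False by (simp_all add: x_def)
  have sv: "mob_smult c s v = (c * tanh x / norm v) *\<^sub>R v"
    using \<open>v \<noteq> 0\<close> by (simp add: mob_smult_def x_def divide_inverse)
  have "mob_smult c s v \<noteq> 0"
    using \<open>v \<noteq> 0\<close> \<open>x \<noteq> 0\<close> assms by (simp add: sv)
  moreover have "artanh (norm (mob_smult c s v) / c) = \<bar>x\<bar>"
    using assms \<open>v \<noteq> 0\<close> by (simp add: sv abs_mult artanh_tanh_real flip: tanh_real_abs)
  moreover have "tanh (r * \<bar>x\<bar>) * tanh x / \<bar>tanh x\<bar> = tanh (r * x)"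
    using \<open>x \<noteq> 0\<close> by (cases "x > 0") (auto simp: abs_if)
  ultimately show ?thesis
    using assms \<open>v \<noteq> 0\<close> unfolding mob_smult_def
    by (simp add: sv x_def mult.assoc abs_mult divide_inverse) (simp add: field_simps)
qed

lemma mob_smult_two:
  fixes x :: "real ^ 'n"
  assumes c: "c > 0" and k: "k = 1/c^2" and "norm x < c"
  shows "mob_smult c 2 x = (2 / (1 + k*(x \<bullet> x))) *\<^sub>R x"
proof (cases "x = 0")
  case False
  define z where "z = norm x / c"
  have "\<bar>z\<bar> < 1"
    using assms by (simp add: z_def)
  then have "tanh (2 * artanh z) = 2*z / (1 + z^2)"
    by (simp add: tanh_double_real tanh_artanh_real)
  moreover have "c * (2*z / (1 + z^2)) / norm x = 2 / (1 + k*(x \<bullet> x))"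
  proof -
    have "c * (c * norm x) + norm x * (norm x * norm x) > 0"
      using False c by (simp add: add_pos_pos)
    then show ?thesis
      using False c unfolding z_def k
      by (simp add: field_simps power2_norm_eq_inner[symmetric] power2_eq_square)
  qed
  ultimately show ?thesis
    using False unfolding mob_smult_def z_def by (simp add: divide_inverse)
qed (simp add: mob_smult_def)

lemma mob_smult_two_mob_add_eq:
  fixes A w :: "real ^ 'n"
  assumes c: "c > 0" and k: "k = 1/c^2" and nA: "norm A < c" and nw: "norm w < c"
  defines "p \<equiv> A \<bullet> A" and "q \<equiv> w \<bullet> w" and "r \<equiv> A \<bullet> w"
  defines "K \<equiv> 1 + k*p + k*q + 4*k*r + k^2*p*q"
  shows "mob_smult c 2 (mob_add c A w) = (2*(1 + 2*k*r + k*q)/K) *\<^sub>R A + (2*(1 - k*p)/K) *\<^sub>R w"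
proof -
  define D where "D = 1 + 2*k*r + k^2*p*q"
  have "D > 0"
    unfolding D_def p_def q_def r_def using mob_add_denom_pos[OF c k nA nw] .
  have Q: "mob_add c A w = (1/D) *\<^sub>R ((1 + 2*k*r + k*q) *\<^sub>R A + (1 - k*p) *\<^sub>R w)"
    unfolding mob_add_curv[OF k] D_def p_def q_def r_def ..
  have "1 - k*(mob_add c A w \<bullet> mob_add c A w) = (1 - k*p)*(1 - k*q)/D"
    unfolding D_def p_def q_def r_def using mob_add_norm[OF c k nA nw] .
  then have "1 + k*(mob_add c A w \<bullet> mob_add c A w) = K/D"
    using \<open>D > 0\<close> unfolding K_def by (simp add: field_simps) (use D_def in algebra)
  then have "mob_smult c 2 (mob_add c A w) = (2*D/K) *\<^sub>R mob_add c A w"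
    using mob_smult_two[OF c k mob_add_in_ball[OF c nA nw]] by simp
  then show ?thesis
    unfolding Q using \<open>D > 0\<close> by (simp add: scaleR_add_right)
qed

lemma mob_add_mob_smult_two:
  fixes A w :: "real ^ 'n"
  assumes c: "c > 0" and k: "k = 1/c^2" and nA: "norm A < c" and nw: "norm w < c"
  defines "p \<equiv> A \<bullet> A" and "q \<equiv> w \<bullet> w" and "r \<equiv> A \<bullet> w"
  defines "b \<equiv> 1 + k*q"
  defines "d \<equiv> b^2 + 4*k*r*b + 4*k^2*p*q"
  defines "P \<equiv> mob_add c A (mob_smult c 2 w)"
  shows "P = ((b^2 + 4*k*r*b + 4*k*q)/d) *\<^sub>R A + (2*(1 - k*p)*b/d) *\<^sub>R w"
    and "1 - k*(P \<bullet> P) = (1 - k*p)*(1 - k*q)^2/d"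
    and "d > 0"
proof -
  have "k > 0" "q \<ge> 0"
    using c k unfolding q_def by simp_all
  then have "b > 0"
    by (simp add: b_def add_pos_nonneg)
  define v where "v = (2/b) *\<^sub>R w"
  have P_def': "P = mob_add c A v"
    unfolding P_def v_def b_def q_def using mob_smult_two[OF c k nw] by simp
  have nv: "norm v < c"
    using mob_smult_in_ball[OF c] mob_smult_two[OF c k nw] unfolding v_def b_def q_def by metis
  have D: "1 + 2*k*(A \<bullet> v) + k^2*(A \<bullet> A)*(v \<bullet> v) = d/b^2"
    unfolding v_def d_def using \<open>b > 0\<close>
    by (simp add: p_def[symmetric] q_def[symmetric] r_def[symmetric] field_simps power2_eq_square)
  show "d > 0"
    using mob_add_denom_pos[OF c k nA nv] \<open>b > 0\<close> unfolding D by (simp add: zero_less_divide_iff)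
  then have nz: "d \<noteq> 0" "b \<noteq> 0"
    using \<open>b > 0\<close> by simp_all
  have vv: "k*(v \<bullet> v) = 4*k*q/b^2" and Av: "A \<bullet> v = 2*r/b"
    unfolding v_def q_def r_def by (simp_all add: power2_eq_square)
  have "P = (b^2/d) *\<^sub>R ((1 + 4*k*r/b + 4*k*q/b^2) *\<^sub>R A + ((1 - k*p)*(2/b)) *\<^sub>R w)"
    unfolding P_def' mob_add_curv[OF k] D unfolding vv Av p_def[symmetric]
    by (simp add: v_def)
  also have "\<dots> = ((b^2 + 4*k*r*b + 4*k*q)/d) *\<^sub>R A + (2*(1 - k*p)*b/d) *\<^sub>R w"
    unfolding scaleR_add_right scaleR_scaleR
    using nz by (intro scaleR_pair_cong; simp add: field_simps power2_eq_square)
  finally show "P = ((b^2 + 4*k*r*b + 4*k*q)/d) *\<^sub>R A + (2*(1 - k*p)*b/d) *\<^sub>R w" .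
  have "1 - k*(P \<bullet> P) = (1 - k*p)*(1 - 4*k*q/b^2)/(d/b^2)"
    using mob_add_norm[OF c k nA nv] unfolding P_def'[symmetric] D vv p_def .
  also have "\<dots> = (1 - k*p)*(1 - k*q)^2/d"
    using nz unfolding b_def by (simp add: field_simps) algebra
  finally show "1 - k*(P \<bullet> P) = (1 - k*p)*(1 - k*q)^2/d" .
qed

lemma mob_coadd_mob_add_smult_two_eq:
  fixes A w :: "real ^ 'n"
  assumes c: "c > 0" and k: "k = 1/c^2" and nA: "norm A < c" and nw: "norm w < c"
  defines "p \<equiv> A \<bullet> A" and "q \<equiv> w \<bullet> w" and "r \<equiv> A \<bullet> w"
  defines "K \<equiv> 1 + k*p + k*q + 4*k*r + k^2*p*q"
  shows "mob_coadd c A (mob_add c A (mob_smult c 2 w)) =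
    (2*(1 + 2*k*r + k*q)/K) *\<^sub>R A + (2*(1 - k*p)/K) *\<^sub>R w"
proof -
  define b d P where "b = 1 + k*q" and "d = b^2 + 4*k*r*b + 4*k^2*p*q"
    and "P = mob_add c A (mob_smult c 2 w)"
  have P: "P = ((b^2 + 4*k*r*b + 4*k*q)/d) *\<^sub>R A + (2*(1 - k*p)*b/d) *\<^sub>R w"
    and eP: "1 - k*(P \<bullet> P) = (1 - k*p)*(1 - k*q)^2/d" and "d > 0"
    using mob_add_mob_smult_two[OF c k nA nw] unfolding b_def d_def P_def p_def q_def r_def by auto
  have "k > 0" "p \<ge> 0" "q \<ge> 0" "k*p < 1"
    using c k nA unfolding p_def q_def norm_less_iff_curv[OF c k] by simp_all
  then have "b > 0"
    by (simp add: b_def add_pos_nonneg)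
  have Kb: "K*b = d + k*p*(1 - k*q)^2"
    unfolding K_def b_def d_def by (simp add: power2_eq_square algebra_simps)
  then have "K*b > 0"
    using \<open>d > 0\<close> \<open>k > 0\<close> \<open>p \<ge> 0\<close> by (simp add: add_pos_nonneg)
  then have nz: "d \<noteq> 0" "b \<noteq> 0" "K \<noteq> 0" "1 - k*p \<noteq> 0"
    using \<open>d > 0\<close> \<open>b > 0\<close> \<open>k*p < 1\<close> by (auto simp: zero_less_mult_iff)
  have E: "1 - k^2*p*(P \<bullet> P) = (1 - k*p)*K*b/d"
  proof -
    have "1 - k^2*p*(P \<bullet> P) = 1 - k*p*(1 - (1 - k*p)*(1 - k*q)^2/d)"
      unfolding eP[symmetric] by (simp add: power2_eq_square)
    also have "\<dots> = (1 - k*p)*K*b/d"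
      using nz by (simp add: field_simps) (use Kb in algebra)
    finally show ?thesis .
  qed
  have "norm P < c"
    unfolding P_def using mob_add_in_ball[OF c nA mob_smult_in_ball[OF c]] .
  then have "mob_coadd c A P = ((1 - k*(P \<bullet> P))/(1 - k^2*p*(P \<bullet> P))) *\<^sub>R A
      + ((1 - k*p)/(1 - k^2*p*(P \<bullet> P))) *\<^sub>R P"
    unfolding p_def by (rule mob_coadd_eq[OF c k nA])
  also have "\<dots> = ((1 - k*q)^2/(K*b)) *\<^sub>R A + (d/(K*b)) *\<^sub>R P"
    unfolding eP E using nz by (simp add: power2_eq_square)
  also have "\<dots> = ((1 - k*q)^2/(K*b) + d/(K*b)*((b^2 + 4*k*r*b + 4*k*q)/d)) *\<^sub>R A
      + (d/(K*b)*(2*(1 - k*p)*b/d)) *\<^sub>R w"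
    unfolding P by (simp add: scaleR_add_right scaleR_add_left)
  also have "\<dots> = (2*(1 + 2*k*r + k*q)/K) *\<^sub>R A + (2*(1 - k*p)/K) *\<^sub>R w"
    using nz by (intro scaleR_pair_cong; simp add: field_simps) (simp add: b_def power2_eq_square algebra_simps)
  finally show ?thesis
    unfolding P_def .
qed

lemma mob_smult_two_mob_add:
  fixes A w :: "real ^ 'n"
  assumes "c > 0" and "norm A < c" and "norm w < c"
  shows "mob_smult c 2 (mob_add c A w) = mob_coadd c A (mob_add c A (mob_smult c 2 w))"
  using mob_smult_two_mob_add_eq[OF assms(1) refl assms(2,3)]
    mob_coadd_mob_add_smult_two_eq[OF assms(1) refl assms(2,3)] by simp

theorem theorem1:
  fixes c :: real and A B :: "real ^ 'n" and t :: real
  assumes "c > 0"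
    and "norm A < c" and "norm B < c"
    and "A \<noteq> B"
  shows "mob_smult c 2 (mob_line c A B t) = mob_coadd c A (mob_line c A B (2 * t))"
proof -
  define w where "w = mob_smult c t (mob_add c (mob_neg A) B)"
  have "mob_line c A B (2 * t) = mob_add c A (mob_smult c 2 w)"
    unfolding mob_line_def w_def mob_smult_mult[OF assms(1)] ..
  moreover have "norm w < c"
    unfolding w_def using mob_smult_in_ball[OF assms(1)] .
  ultimately show ?thesis
    unfolding mob_line_def w_def[symmetric] using mob_smult_two_mob_add assms(1,2) by simp
qed

end
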